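(* There exist absolute constants $C, C'>0$ such that the following holds. Let $n\ge 2$, $1\le k\le n/2$ and $d\ge 0$ be integers, let $\alpha=\lceil k\log(n/k)\rceil$, and let $t$ be an integer with $t\ge C\,(dk+k^2)\log(n/k)$ (so that in particular $\alpha\le t/(2d+1)$). Then the random $t\times n$ matrix $M$ produced by $\mathsf{RandMatrix}(t,n,d,k,\alpha)$ is $d$-runlength constrained, and with probability at least $1-C'/n$ it is $k$-disjunct. (In the paper's words: with $\alpha=k\log(n/k)$ and $t=\Theta(dk\log(n/k)+k^2\log(n/k))$, the output is a $k$-disjunct, $d$-runlength constrained matrix with probability at least $1-O(1/n)$.)
   Context: $\log$ denotes the base-2 logarithm. For a vector $x$, $\mathsf{supp}(x)$ is its support. A binary $t\times n$ matrix $M$ is $d$-runlength constrained if in every column, any two $1$'s are separated by a run of at least $d$ zeros, i.e. $M_{ij}=M_{i'j}=1$ with $i<i'$ implies $i'-i\ge d+1$. A binary matrix $M$ is $k$-disjunct if for every column $j$ and every set $S$ of at most $k$ columns with $j\notin S$, $\mathsf{supp}(M_{\cdot j})\not\subseteq\bigcup_{j'\in S}\mathsf{supp}(M_{\cdot j'})$. Procedure $\mathsf{RandMatrix}(t,n,d,k,\alpha)$ (requires $\alpha\le t/(2d+1)$): each column $M_{\cdot j}$, $j\in[n]$, is generated independently and identically as follows. Initialize the list $I=(1,2,\dots,t)$, viewed in cyclic order. Repeat $\alpha$ times: pick an index $i$ uniformly at random from $I$; set $M_{ij}=1$; let $U$ consist of $i$ together with the $d$ elements of $I$ immediately preceding $i$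 and the $d$ elements of $I$ immediately succeeding $i$ in the cyclic order of $I$; remove $U$ from $I$. All entries of column $j$ not set to $1$ are $0$. *)

theory Defs
  imports "HOL-Probability.Probability"
begin

text \<open>Binary t x n matrices are modelled as M :: nat => nat => bool, where
  M i j (row i in {1..t}, column j in {1..n}) means the entry is 1.\<close>

definition runlength_constrained :: "nat \<Rightarrow> nat \<Rightarrow> nat \<Rightarrow> (nat \<Rightarrow> nat \<Rightarrow> bool) \<Rightarrow> bool" where
  "runlength_constrained t n d M \<longleftrightarrow>
     (\<forall>j\<in>{1..n}. \<forall>i\<in>{1..t}. \<forall>i'\<in>{1..t}. M i j \<and> M i' j \<and> i < i' \<longrightarrow> i' - i \<ge> d + 1)"

definition col_supp :: "nat \<Rightarrow> (nat \<Rightarrow> nat \<Rightarrow> bool) \<Rightarrow> nat \<Rightarrow> nat set" where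
  "col_supp t M j = {i\<in>{1..t}. M i j}"

definition disjunct :: "nat \<Rightarrow> nat \<Rightarrow> nat \<Rightarrow> (nat \<Rightarrow> nat \<Rightarrow> bool) \<Rightarrow> bool" where
  "disjunct t n k M \<longleftrightarrow>
     (\<forall>j\<in>{1..n}. \<forall>S. S \<subseteq> {1..n} \<and> card S \<le> k \<and> j \<notin> S \<longrightarrow>
        \<not> (col_supp t M j \<subseteq> (\<Union>j'\<in>S. col_supp t M j')))"

text \<open>Remove from the list xs (viewed cyclically) the element at position p together with the
  d elements immediately preceding and the d elements immediately succeeding it (cyclically).\<close>
definition remove_window :: "nat \<Rightarrow> nat \<Rightarrow> nat list \<Rightarrow> nat list" where
  "remove_window d p xs =
     (let L = length xs in
      map (\<lambda>q. xs ! q)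
        (filter (\<lambda>q. \<not> (\<exists>m\<le>2*d. q = (p + L * (d + 1) - d + m) mod L)) [0..<L]))"

text \<open>One round: pick an element of the remaining list uniformly at random, record it as a 1,
  and delete its cyclic window of radius d. State = (remaining list I, set of rows set to 1).\<close>
definition rm_step :: "nat \<Rightarrow> nat list \<times> nat set \<Rightarrow> (nat list \<times> nat set) pmf" where
  "rm_step d s = (case s of (I, S) \<Rightarrow>
     if I = [] then return_pmf (I, S)
     else do { p \<leftarrow> pmf_of_set {0..<length I};
               return_pmf (remove_window d p I, insert (I ! p) S) })"

fun rm_iter :: "nat \<Rightarrow> nat \<Rightarrow> nat list \<times> nat set \<Rightarrow> (nat list \<times> nat set) pmf" where
  "rm_iter d 0 s = return_pmf s"
| "rm_iter d (Suc m) s = bind_pmf (rm_iter d m s) (rm_step d)"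

definition rand_column :: "nat \<Rightarrow> nat \<Rightarrow> nat \<Rightarrow> nat set pmf" where
  "rand_column t d \<alpha> = map_pmf snd (rm_iter d \<alpha> ([1..<Suc t], {}))"

text \<open>RandMatrix(t,n,d,k,alpha): n independent identically distributed columns (k is unused
  by the procedure itself).\<close>
definition RandMatrix :: "nat \<Rightarrow> nat \<Rightarrow> nat \<Rightarrow> nat \<Rightarrow> nat \<Rightarrow> (nat \<Rightarrow> nat \<Rightarrow> bool) pmf" where
  "RandMatrix t n d k \<alpha> =
     map_pmf (\<lambda>f i j. i \<in> f j) (Pi_pmf {1..n} {} (\<lambda>_. rand_column t d \<alpha>))"

end

(*
  Every pick of RandMatrix deletes the 2d+1 cyclically adjacent still-available rows, so the rows
  chosen in a column are more than d apart, and in each of the alpha rounds at least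
  t - (2d+1) alpha rows are still available. Hence all alpha picks of a column land in a fixed set U
  of rows with probability at most (|U| / (t - (2d+1) alpha))^alpha. Conditioning on the other
  columns, column j is covered by k given columns only if its picks land in their union, which has
  at most k alpha rows; for t >= 16384 (dk + k^2) log(n/k) this has probability at most
  4096^(-alpha) <= (n/k)^(-12k). A union bound over the n * C(n-1, k) choices of j and of the k
  covering columns, together with C(n, k) <= (3n/k)^k, bounds the failure probability by 1/n.
*)
theory Submission
  imports Defs
begin

lemma power_div_fact_le_exp:
  fixes x :: real
  assumes "0 \<le> x"
  shows "x ^ n / fact n \<le> exp x"
proof -
  have sums: "(\<lambda>i. x ^ i /\<^sub>R fact i) sums exp x" by (rule exp_converges)
  have "x ^ n / fact n = (\<Sum>i\<in>{n}. x ^ i /\<^sub>R fact i)" by (simp add: divide_inverse mult.commute)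
  also have "\<dots> \<le> (\<Sum>i. x ^ i /\<^sub>R fact i)"
    by (rule sum_le_suminf) (use sums assms in \<open>auto simp: sums_iff\<close>)
  also have "\<dots> = exp x" using sums by (simp add: sums_iff)
  finally show ?thesis .
qed

lemma binomial_le_three_n_over_k_pow: "real (n choose k) \<le> (3 * real n / real k) ^ k"
proof (cases "k = 0")
  case False
  have "real k ^ k / fact k \<le> exp (real k)" by (rule power_div_fact_le_exp) simp
  also have "\<dots> = exp 1 ^ k" by (simp flip: exp_of_nat_mult)
  also have "\<dots> \<le> 3 ^ k" by (intro power_mono exp_le) auto
  finally have kk: "real k ^ k \<le> 3 ^ k * fact k" by (simp add: field_simps)
  have nk: "real (n choose k) * fact k \<le> real n ^ k"
    using binomial_fact_pow[of n k] by (metis of_nat_fact of_nat_le_iff of_nat_mult of_nat_power)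
  have "real (n choose k) * real k ^ k \<le> real (n choose k) * (3 ^ k * fact k)"
    by (intro mult_left_mono kk) auto
  also have "\<dots> = 3 ^ k * (real (n choose k) * fact k)" by simp
  also have "\<dots> \<le> 3 ^ k * real n ^ k" by (intro mult_left_mono nk) auto
  finally show ?thesis using False by (simp add: power_divide power_mult_distrib field_simps)
qed simp

lemma strict_sorted_nth_gap:
  fixes xs :: "nat list"
  assumes "sorted_wrt (<) xs" "i \<le> j" "j < length xs"
  shows "xs ! i + (j - i) \<le> xs ! j"
  using assms(2,3)
proof (induction j rule: dec_induct)
  case (step j)
  have "xs ! j < xs ! Suc j" using assms(1) step.prems by (simp add: sorted_wrt_nth_less)
  with step show ?case by simp
qed simp

text \<open>The summand \<open>L * (d + 1)\<close>, taken from the definition of \<^const>\<open>remove_window\<close>,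
  only prevents truncated subtraction.\<close>
definition in_window :: "nat \<Rightarrow> nat \<Rightarrow> nat \<Rightarrow> nat \<Rightarrow> bool" where
  "in_window d p L q \<longleftrightarrow> (\<exists>m\<le>2*d. q = (p + L * (d + 1) - d + m) mod L)"

lemma remove_window_eq_filter:
  "remove_window d p xs = map ((!) xs) (filter (\<lambda>q. \<not> in_window d p (length xs) q) [0..<length xs])"
  by (simp add: remove_window_def in_window_def Let_def)

text \<open>Only the non-cyclic neighbours of position \<open>p\<close> matter below; the wrap-around part of the
  window deletes further elements, which can only help.\<close>
lemma in_window_if_near:
  assumes "p < L" "q < L" "q \<le> p + d" "p \<le> q + d"
  shows "in_window d p L q"
proof -
  have "d \<le> L * (d + 1)" using assms(1) by (simp add: trans_le_add2)
  then have "p + L * (d + 1) - d + (q + d - p) = q + L * (d + 1)" using assms(4) by linarith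
  moreover have "(q + L * (d + 1)) mod L = q" using assms(2) by (simp only: mod_mult_self2 mod_less)
  ultimately have "(p + L * (d + 1) - d + (q + d - p)) mod L = q" by simp
  then show ?thesis unfolding in_window_def using assms(3) by (intro exI[of _ "q + d - p"]) auto
qed

lemma in_window_finite_card:
  shows "finite {q. in_window d p L q}" and "card {q. in_window d p L q} \<le> 2 * d + 1"
proof -
  have "{q. in_window d p L q} = (\<lambda>m. (p + L * (d + 1) - d + m) mod L) ` {0..2*d}"
    by (auto simp: in_window_def)
  then show "finite {q. in_window d p L q}" "card {q. in_window d p L q} \<le> 2 * d + 1"
    using card_image_le[of "{0..2*d}"] by simp_all
qed

lemma length_remove_window: "length xs \<le> length (remove_window d p xs) + (2 * d + 1)"
proof -
  let ?L = "length xs" and ?W = "{q. in_window d p (length xs) q}"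
  have "length (remove_window d p xs) = card ({..<?L} - ?W)"
    unfolding remove_window_eq_filter length_map length_filter_conv_card
    by (rule arg_cong[where f=card]) auto
  moreover have "?L \<le> card (({..<?L} - ?W) \<union> ?W)"
    using card_mono[of "({..<?L} - ?W) \<union> ?W" "{..<?L}"] in_window_finite_card(1) by auto
  moreover have "card (({..<?L} - ?W) \<union> ?W) \<le> card ({..<?L} - ?W) + card ?W"
    by (rule card_Un_le)
  ultimately show ?thesis using in_window_finite_card(2)[of d p ?L] by linarith
qed

lemma set_remove_window_subset: "set (remove_window d p xs) \<subseteq> set xs"
  by (auto simp: remove_window_eq_filter)

lemma sorted_remove_window:
  "sorted_wrt (<) xs \<Longrightarrow> sorted_wrt (<) (remove_window d p (xs :: nat list))"
  unfolding remove_window_eq_filter sorted_wrt_map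
  by (rule sorted_wrt_filter, rule sorted_wrt_mono_rel[OF _ sorted_wrt_upt])
     (auto simp: sorted_wrt_nth_less)

lemma remove_window_far:
  assumes "sorted_wrt (<) (xs :: nat list)" "p < length xs" "y \<in> set (remove_window d p xs)"
  shows "xs ! p + d < y \<or> y + d < xs ! p"
proof -
  obtain q where q: "q < length xs" "\<not> in_window d p (length xs) q" "y = xs ! q"
    using assms(3) by (auto simp: remove_window_eq_filter)
  then have "\<not> (q \<le> p + d \<and> p \<le> q + d)" using in_window_if_near[OF assms(2) q(1)] by blast
  then have "p + d < q \<or> q + d < p" by linarith
  then show ?thesis
  proof
    assume "p + d < q"
    with strict_sorted_nth_gap[OF assms(1), of p q] q show ?thesis by linarith
  next
    assume "q + d < p"
    with strict_sorted_nth_gap[OF assms(1), of q p] q assms(2) show ?thesis by linarith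
  qed
qed

definition rm_invariant :: "nat \<Rightarrow> nat \<Rightarrow> nat \<Rightarrow> nat list \<times> nat set \<Rightarrow> bool" where
  "rm_invariant t d m s \<longleftrightarrow> (case s of (I, S) \<Rightarrow>
     sorted_wrt (<) I \<and> set I \<subseteq> {1..t} \<and> S \<subseteq> {1..t} \<and> finite S \<and> card S \<le> m \<and>
     t \<le> length I + (2 * d + 1) * m \<and>
     (\<forall>x\<in>S. \<forall>y\<in>set I. x + d < y \<or> y + d < x) \<and> (\<forall>x\<in>S. \<forall>y\<in>S. x < y \<longrightarrow> x + d < y))"

lemma rm_invariant_init: "rm_invariant t d 0 ([1..<Suc t], {})"
  by (simp add: rm_invariant_def sorted_wrt_upt atLeastLessThanSuc_atLeastAtMost del: upt_Suc)

lemma rm_invariant_step: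
  assumes "rm_invariant t d m s" "s' \<in> set_pmf (rm_step d s)"
  shows "rm_invariant t d (Suc m) s'"
proof -
  obtain I S where s: "s = (I, S)" by (cases s)
  show ?thesis
  proof (cases "I = []")
    case True
    then show ?thesis using assms s by (auto simp: rm_step_def rm_invariant_def)
  next
    case False
    then obtain p where p: "p < length I" "s' = (remove_window d p I, insert (I ! p) S)"
      using assms(2) s by (auto simp: rm_step_def)
    have inv: "sorted_wrt (<) I" "set I \<subseteq> {1..t}" "S \<subseteq> {1..t}" "finite S" "card S \<le> m"
      "t \<le> length I + (2 * d + 1) * m" "\<forall>x\<in>S. \<forall>y\<in>set I. x + d < y \<or> y + d < x"
      "\<forall>x\<in>S. \<forall>y\<in>S. x < y \<longrightarrow> x + d < y"
      using assms(1) s by (auto simp: rm_invariant_def)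
    let ?I' = "remove_window d p I" and ?z = "I ! p"
    have z: "?z \<in> set I" using p by simp
    have sub: "set ?I' \<subseteq> set I" by (rule set_remove_window_subset)
    have "sorted_wrt (<) ?I'" using sorted_remove_window[OF inv(1)] .
    moreover have "set ?I' \<subseteq> {1..t}" "insert ?z S \<subseteq> {1..t}" "finite (insert ?z S)"
      using sub z inv by auto
    moreover have "card (insert ?z S) \<le> Suc m" using inv by (simp add: card_insert_if)
    moreover have "t \<le> length ?I' + (2 * d + 1) * Suc m"
      using inv(6) length_remove_window[of I d p] by simp
    moreover have "\<forall>x\<in>insert ?z S. \<forall>y\<in>set ?I'. x + d < y \<or> y + d < x"
      using inv(7) sub remove_window_far[OF inv(1) p(1)] by blast
    moreover have "\<forall>x\<in>insert ?z S. \<forall>y\<in>insert ?z S. x < y \<longrightarrow> x + d < y"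
      using inv(7,8) z by fastforce
    ultimately show ?thesis using p by (simp add: rm_invariant_def)
  qed
qed

lemma rm_invariant_iter: "s \<in> set_pmf (rm_iter d m ([1..<Suc t], {})) \<Longrightarrow> rm_invariant t d m s"
proof (induction m arbitrary: s)
  case 0
  then show ?case using rm_invariant_init by simp
next
  case (Suc m)
  then obtain s0 where "s0 \<in> set_pmf (rm_iter d m ([1..<Suc t], {}))" "s \<in> set_pmf (rm_step d s0)"
    by auto
  then show ?case using Suc.IH rm_invariant_step by blast
qed

lemma rand_column_support:
  assumes "S \<in> set_pmf (rand_column t d \<alpha>)"
  shows "S \<subseteq> {1..t}" "finite S" "card S \<le> \<alpha>" "\<forall>x\<in>S. \<forall>y\<in>S. x < y \<longrightarrow> x + d < y"
proof -
  obtain I where "(I, S) \<in> set_pmf (rm_iter d \<alpha> ([1..<Suc t], {}))"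
    using assms unfolding rand_column_def by auto
  then have "rm_invariant t d \<alpha> (I, S)" by (rule rm_invariant_iter)
  then show "S \<subseteq> {1..t}" "finite S" "card S \<le> \<alpha>" "\<forall>x\<in>S. \<forall>y\<in>S. x < y \<longrightarrow> x + d < y"
    by (simp_all add: rm_invariant_def)
qed

lemma measure_bind_pmf:
  "measure_pmf.prob (bind_pmf M N) X = (\<integral>x. measure_pmf.prob (N x) X \<partial>M)"
proof -
  have "ennreal (measure_pmf.prob (bind_pmf M N) X) = (\<integral>\<^sup>+x. ennreal (measure_pmf.prob (N x) X) \<partial>M)"
    by (simp flip: measure_pmf.emeasure_eq_measure)
  also have "\<dots> = ennreal (\<integral>x. measure_pmf.prob (N x) X \<partial>M)"
    by (intro nn_integral_eq_integral measure_pmf.integrable_const_bound[where B=1]) auto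
  finally show ?thesis by (simp add: integral_nonneg_AE)
qed

lemma measure_bind_pmf_le:
  assumes "\<And>x. x \<in> set_pmf M \<Longrightarrow> measure_pmf.prob (N x) X \<le> c * indicator A x" "c \<ge> 0"
  shows "measure_pmf.prob (bind_pmf M N) X \<le> c * measure_pmf.prob M A"
proof -
  have "measure_pmf.prob (bind_pmf M N) X = (\<integral>x. measure_pmf.prob (N x) X \<partial>M)"
    by (rule measure_bind_pmf)
  also have "\<dots> \<le> (\<integral>x. c * indicator A x \<partial>M)"
  proof (intro integral_mono_AE AE_pmfI assms)
    show "integrable (measure_pmf M) (\<lambda>x. measure_pmf.prob (N x) X)"
      by (intro measure_pmf.integrable_const_bound[where B=1]) auto
    show "integrable (measure_pmf M) (\<lambda>x. c * indicator A x)"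
      by (intro measure_pmf.integrable_const_bound[where B=c]) (auto simp: indicator_def assms)
  qed
  also have "\<dots> = c * measure_pmf.prob M A" by simp
  finally show ?thesis .
qed

lemma measure_rm_step_subset_le:
  assumes "I \<noteq> []" "distinct I" "finite U"
  shows "measure_pmf.prob (rm_step d (I, S)) {s. snd s \<subseteq> U}
           \<le> card U / length I * indicator {s. snd s \<subseteq> U} (I, S)"
proof -
  let ?P = "{0..<length I} \<inter> {p. insert (I ! p) S \<subseteq> U}"
  have "rm_step d (I, S)
      = map_pmf (\<lambda>p. (remove_window d p I, insert (I ! p) S)) (pmf_of_set {0..<length I})"
    using assms(1) by (simp add: rm_step_def map_pmf_def)
  moreover have "{0..<length I} \<noteq> {}" using assms(1) by simp
  ultimately have prob: "measure_pmf.prob (rm_step d (I, S)) {s. snd s \<subseteq> U} = card ?P / length I"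
    by (simp add: measure_pmf_of_set vimage_def)
  show ?thesis
  proof (cases "S \<subseteq> U")
    case False
    then have "?P = {}" by auto
    then show ?thesis using prob False by (simp add: indicator_def)
  next
    case True
    have "card ?P \<le> card U"
      by (rule card_inj_on_le[where f="(!) I"]) (use assms in \<open>auto simp: inj_on_def nth_eq_iff_index_eq\<close>)
    then show ?thesis using prob True by (simp add: indicator_def divide_right_mono)
  qed
qed

lemma measure_rm_iter_subset_le:
  assumes "finite U" "(2 * d + 1) * m < t"
  shows "measure_pmf.prob (rm_iter d m ([1..<Suc t], {})) {s. snd s \<subseteq> U}
           \<le> (card U / (real t - real ((2 * d + 1) * m))) ^ m"
  using assms(2)
proof (induction m)
  case (Suc m)
  let ?l = "real t - real ((2 * d + 1) * Suc m)" and ?lprev = "real t - real ((2 * d + 1) * m)"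
  have l: "0 < ?l" "?l \<le> ?lprev" using Suc.prems by (simp_all only: of_nat_less_iff diff_gt_0_iff_gt) simp
  have IH: "measure_pmf.prob (rm_iter d m ([1..<Suc t], {})) {s. snd s \<subseteq> U} \<le> (card U / ?lprev) ^ m"
    using Suc by simp
  have "measure_pmf.prob (rm_iter d (Suc m) ([1..<Suc t], {})) {s. snd s \<subseteq> U}
      \<le> card U / ?l * measure_pmf.prob (rm_iter d m ([1..<Suc t], {})) {s. snd s \<subseteq> U}"
    unfolding rm_iter.simps
  proof (rule measure_bind_pmf_le)
    fix s assume s: "s \<in> set_pmf (rm_iter d m ([1..<Suc t], {}))"
    obtain I S where IS: "s = (I, S)" by (cases s)
    then have "rm_invariant t d m (I, S)" using rm_invariant_iter s by blast
    then have "t \<le> length I + (2 * d + 1) * m" and "distinct I"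
      by (auto simp: rm_invariant_def strict_sorted_iff)
    then have len: "?lprev \<le> length I" by (simp only: of_nat_add[symmetric] of_nat_le_iff diff_le_eq)
    with l have "0 < real (length I)" by linarith
    with l have "I \<noteq> []" and pos: "0 < real (length I) * ?l" by auto
    have "measure_pmf.prob (rm_step d (I, S)) {s. snd s \<subseteq> U}
           \<le> card U / length I * indicator {s. snd s \<subseteq> U} (I, S)"
      by (rule measure_rm_step_subset_le) fact+
    also have "\<dots> \<le> card U / ?l * indicator {s. snd s \<subseteq> U} (I, S)"
      using l len pos by (intro mult_right_mono divide_left_mono) auto
    finally show "measure_pmf.prob (rm_step d s) {s. snd s \<subseteq> U} \<le> card U / ?l * indicator {s. snd s \<subseteq> U} s"
      using IS by simp
  qed (use l in simp)
  also have "\<dots> \<le> card U / ?l * (card U / ?l) ^ m"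
    using l by (intro mult_left_mono order.trans[OF IH] power_mono divide_left_mono) auto
  finally show ?case by simp
qed simp

lemma measure_rand_column_subset_le:
  assumes "finite U" "(2 * d + 1) * \<alpha> < t"
  shows "measure_pmf.prob (rand_column t d \<alpha>) {S. S \<subseteq> U}
           \<le> (card U / (real t - real ((2 * d + 1) * \<alpha>))) ^ \<alpha>"
  using measure_rm_iter_subset_le[OF assms] unfolding rand_column_def measure_map_pmf
  by (simp add: vimage_def)

lemma measure_rand_column_covered_le:
  assumes "finite U" "card U \<le> k * \<alpha>" "(2 * d + 1) * \<alpha> < t"
  shows "measure_pmf.prob (rand_column t d \<alpha>) {S. S \<inter> {1..t} \<subseteq> U}
           \<le> (real (k * \<alpha>) / (real t - real ((2 * d + 1) * \<alpha>))) ^ \<alpha>"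
proof -
  let ?c = "rand_column t d \<alpha>"
  have "measure_pmf.prob ?c {S. S \<inter> {1..t} \<subseteq> U} \<le> measure_pmf.prob ?c {S. S \<subseteq> U}"
  proof (rule measure_pmf.finite_measure_mono_AE)
    show "AE S in ?c. S \<in> {S. S \<inter> {1..t} \<subseteq> U} \<longrightarrow> S \<in> {S. S \<subseteq> U}"
    proof (rule AE_pmfI)
      fix S assume "S \<in> set_pmf ?c"
      then have "S \<subseteq> {1..t}" by (rule rand_column_support(1))
      then show "S \<in> {S. S \<inter> {1..t} \<subseteq> U} \<longrightarrow> S \<in> {S. S \<subseteq> U}" by blast
    qed
  qed simp
  also have "\<dots> \<le> (card U / (real t - real ((2 * d + 1) * \<alpha>))) ^ \<alpha>"
    using assms(1,3) by (rule measure_rand_column_subset_le)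
  also have "\<dots> \<le> (real (k * \<alpha>) / (real t - real ((2 * d + 1) * \<alpha>))) ^ \<alpha>"
  proof -
    have "real ((2 * d + 1) * \<alpha>) < real t" using assms(3) by (simp only: of_nat_less_iff)
    moreover have "real (card U) \<le> real (k * \<alpha>)" using assms(2) by (simp only: of_nat_le_iff)
    ultimately show ?thesis by (intro power_mono divide_right_mono) simp_all
  qed
  finally show ?thesis .
qed

lemma col_supp_of_sets: "col_supp t (\<lambda>i j. i \<in> f j) j = f j \<inter> {1..t}"
  by (auto simp: col_supp_def)

lemma set_pmf_RandMatrixE:
  assumes "M \<in> set_pmf (RandMatrix t n d k \<alpha>)"
  obtains f where "\<And>j. j \<in> {1..n} \<Longrightarrow> f j \<in> set_pmf (rand_column t d \<alpha>)" "M = (\<lambda>i j. i \<in> f j)"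
  using assms unfolding RandMatrix_def by (auto simp: set_Pi_pmf PiE_dflt_def)

lemma runlength_constrained_RandMatrix:
  assumes "M \<in> set_pmf (RandMatrix t n d k \<alpha>)"
  shows "runlength_constrained t n d M"
proof -
  obtain f where f: "\<And>j. j \<in> {1..n} \<Longrightarrow> f j \<in> set_pmf (rand_column t d \<alpha>)" "M = (\<lambda>i j. i \<in> f j)"
    using set_pmf_RandMatrixE[OF assms] by blast
  show ?thesis
    unfolding runlength_constrained_def
    using rand_column_support(4)[OF f(1)] f(2) by fastforce
qed

lemma RandMatrix_split_column:
  assumes "j \<in> {1..n}"
  shows "RandMatrix t n d k \<alpha> =
           bind_pmf (Pi_pmf ({1..n} - {j}) {} (\<lambda>_. rand_column t d \<alpha>))
             (\<lambda>f. map_pmf (\<lambda>y i j'. i \<in> (f(j := y)) j') (rand_column t d \<alpha>))"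
proof -
  let ?c = "rand_column t d \<alpha>" and ?A = "{1..n} - {j}"
  have "Pi_pmf {1..n} {} (\<lambda>_. ?c) = Pi_pmf (insert j ?A) {} (\<lambda>_. ?c)"
    using assms by (simp add: insert_absorb)
  also have "\<dots> = bind_pmf ?c (\<lambda>y. bind_pmf (Pi_pmf ?A {} (\<lambda>_. ?c)) (\<lambda>f. return_pmf (f(j := y))))"
    by (rule Pi_pmf_insert') auto
  also have "\<dots> = bind_pmf (Pi_pmf ?A {} (\<lambda>_. ?c)) (\<lambda>f. bind_pmf ?c (\<lambda>y. return_pmf (f(j := y))))"
    by (rule bind_commute_pmf)
  finally show ?thesis
    unfolding RandMatrix_def by (simp add: map_bind_pmf map_pmf_def[symmetric] pmf.map_comp o_def)
qed

lemma measure_RandMatrix_covered_le: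
  assumes "j \<in> {1..n}" "S \<subseteq> {1..n}" "j \<notin> S" "card S \<le> k" "(2 * d + 1) * \<alpha> < t"
  shows "measure_pmf.prob (RandMatrix t n d k \<alpha>) {M. col_supp t M j \<subseteq> (\<Union>j'\<in>S. col_supp t M j')}
           \<le> (real (k * \<alpha>) / (real t - real ((2 * d + 1) * \<alpha>))) ^ \<alpha>"
  (is "measure_pmf.prob _ ?X \<le> ?q")
proof -
  let ?c = "rand_column t d \<alpha>" and ?A = "{1..n} - {j}"
  have "real ((2 * d + 1) * \<alpha>) < real t" using assms(5) by (simp only: of_nat_less_iff)
  then have q: "0 \<le> ?q" by simp
  have "measure_pmf.prob (RandMatrix t n d k \<alpha>) ?X \<le> ?q * measure_pmf.prob (Pi_pmf ?A {} (\<lambda>_. ?c)) UNIV"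
    unfolding RandMatrix_split_column[OF assms(1)]
  proof (rule measure_bind_pmf_le)
    fix f assume f_in: "f \<in> set_pmf (Pi_pmf ?A {} (\<lambda>_. ?c))"
    have f: "f j' \<in> set_pmf ?c" if "j' \<in> S" for j'
    proof -
      have "j' \<in> ?A" using assms(2,3) that by auto
      then show ?thesis using f_in by (auto simp: set_Pi_pmf PiE_dflt_def)
    qed
    define U where "U = (\<Union>j'\<in>S. f j')"
    have fin: "finite S" using assms(2) finite_subset by blast
    have "finite U" unfolding U_def using fin f rand_column_support(2) by blast
    have "card U \<le> (\<Sum>j'\<in>S. card (f j'))" unfolding U_def by (rule card_UN_le[OF fin])
    also have "\<dots> \<le> (\<Sum>j'\<in>S. \<alpha>)" using f rand_column_support(3) by (intro sum_mono) blast
    also have "\<dots> \<le> k * \<alpha>" using assms(4) by simp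
    finally have "card U \<le> k * \<alpha>" .
    have "(\<lambda>y i j'. i \<in> (f(j := y)) j') -` ?X = {y. y \<inter> {1..t} \<subseteq> U}"
      using assms(3) by (fastforce simp: col_supp_of_sets U_def)
    then have "measure_pmf.prob (map_pmf (\<lambda>y i j'. i \<in> (f(j := y)) j') ?c) ?X
        = measure_pmf.prob ?c {y. y \<inter> {1..t} \<subseteq> U}"
      by simp
    also have "\<dots> \<le> ?q"
      by (rule measure_rand_column_covered_le) fact+
    finally show "measure_pmf.prob (map_pmf (\<lambda>y i j'. i \<in> (f(j := y)) j') ?c) ?X \<le> ?q * indicator UNIV f"
      by simp
  qed (rule q)
  then show ?thesis by simp
qed

lemma measure_RandMatrix_not_disjunct_le:
  assumes "k + 1 \<le> n" "(2 * d + 1) * \<alpha> < t"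
  shows "measure_pmf.prob (RandMatrix t n d k \<alpha>) {M. \<not> disjunct t n k M}
     \<le> real n * real ((n - 1) choose k) * (real (k * \<alpha>) / (real t - real ((2 * d + 1) * \<alpha>))) ^ \<alpha>"
proof -
  let ?P = "RandMatrix t n d k \<alpha>"
  let ?q = "(real (k * \<alpha>) / (real t - real ((2 * d + 1) * \<alpha>))) ^ \<alpha>"
  define Cov where "Cov = (\<lambda>(j, S). {M. col_supp t M j \<subseteq> (\<Union>j'\<in>S. col_supp t M j')})"
  define II where "II = (SIGMA j:{1..n}. {S. S \<subseteq> {1..n} - {j} \<and> card S = k})"
  have card_others: "card ({1..n} - {j}) = n - 1" if "j \<in> {1..n}" for j
    using that by simp
  have "finite II" unfolding II_def by (auto intro: finite_subset[of _ "Pow {1..n}"])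
  have card_II: "card II = n * ((n - 1) choose k)"
    unfolding II_def using card_others by (simp add: card_SigmaI n_subsets)
  have "{M. \<not> disjunct t n k M} \<subseteq> (\<Union>i\<in>II. Cov i)"
  proof
    fix M assume "M \<in> {M. \<not> disjunct t n k M}"
    then obtain j S where j: "j \<in> {1..n}" and S: "S \<subseteq> {1..n}" "card S \<le> k" "j \<notin> S"
      and cov: "col_supp t M j \<subseteq> (\<Union>j'\<in>S. col_supp t M j')"
      unfolding disjunct_def by blast
    have "card S \<le> k" "k \<le> card ({1..n} - {j})" using card_others[OF j] assms(1) S by auto
    then obtain S' where S': "S \<subseteq> S'" "S' \<subseteq> {1..n} - {j}" "card S' = k"
      using exists_subset_between[of S k "{1..n} - {j}"] S by auto
    have "(j, S') \<in> II" using j S' by (simp add: II_def)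
    moreover have "M \<in> Cov (j, S')" using cov S'(1) unfolding Cov_def by fastforce
    ultimately show "M \<in> (\<Union>i\<in>II. Cov i)" by blast
  qed
  then have "measure_pmf.prob ?P {M. \<not> disjunct t n k M} \<le> measure_pmf.prob ?P (\<Union>i\<in>II. Cov i)"
    by (rule measure_pmf.finite_measure_mono) auto
  also have "\<dots> \<le> (\<Sum>i\<in>II. measure_pmf.prob ?P (Cov i))"
    by (rule measure_pmf.finite_measure_subadditive_finite) (use \<open>finite II\<close> in auto)
  also have "\<dots> \<le> (\<Sum>i\<in>II. ?q)"
  proof (rule sum_mono)
    fix i assume "i \<in> II"
    then obtain j S where "i = (j, S)" "j \<in> {1..n}" "S \<subseteq> {1..n} - {j}" "card S = k"
      by (auto simp: II_def)
    then show "measure_pmf.prob ?P (Cov i) \<le> ?q"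
      unfolding Cov_def using measure_RandMatrix_covered_le[of j n S k d \<alpha> t] assms(2) by auto
  qed
  also have "\<dots> = real n * real ((n - 1) choose k) * ?q" using card_II by simp
  finally show ?thesis .
qed

lemma window_ratio_le:
  fixes d k t \<alpha> :: nat and L :: real
  assumes "1 \<le> k" "1 \<le> L" "real \<alpha> \<le> 2 * real k * L"
    and "16384 * (real d * real k + real k ^ 2) * L \<le> real t"
  shows "(2 * d + 1) * \<alpha> < t"
    and "real (k * \<alpha>) / (real t - real ((2 * d + 1) * \<alpha>)) \<le> 1 / 4096"
proof -
  define D where "D = (real d * real k + real k ^ 2) * L"
  have kL: "real k * L \<le> real k ^ 2 * L" "1 \<le> real k * L" "0 \<le> real d * real k * L"
    using assms(1,2) mult_mono[of 1 "real k" 1 L] by (auto simp: power2_eq_square)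
  then have D: "1 \<le> D" "real k * L \<le> D" "real d * real k * L + real k * L \<le> D"
    "real k ^ 2 * L \<le> D"
    unfolding D_def by (auto simp: algebra_simps)
  have "real ((2 * d + 1) * \<alpha>) = (2 * real d + 1) * real \<alpha>" by (simp add: algebra_simps)
  also have "\<dots> \<le> (2 * real d + 1) * (2 * real k * L)" using assms(3) by (intro mult_left_mono) auto
  also have "\<dots> = 4 * (real d * real k * L) + 2 * (real k * L)" by (simp add: algebra_simps)
  also have "\<dots> \<le> 4 * D" using D(3) kL(2) by linarith
  finally have window: "real ((2 * d + 1) * \<alpha>) \<le> 4 * D" .
  have kalpha: "real (k * \<alpha>) \<le> 2 * D"
    using mult_left_mono[OF assms(3), of "real k"] D(4) by (simp add: power2_eq_square algebra_simps)
  have t: "16384 * D \<le> real t" using assms(4) unfolding D_def by (simp only: mult.assoc)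
  then show "(2 * d + 1) * \<alpha> < t" using window D(1) by linarith
  have "real (k * \<alpha>) / (real t - real ((2 * d + 1) * \<alpha>)) \<le> 2 * D / (real t / 2)"
    using window t D(1) kalpha by (intro frac_le) auto
  also have "\<dots> = 4 * D / real t" by simp
  also have "\<dots> \<le> 1 / 4096" using t D(1) by (simp add: pos_divide_le_eq)
  finally show "real (k * \<alpha>) / (real t - real ((2 * d + 1) * \<alpha>)) \<le> 1 / 4096" .
qed

lemma union_bound_le_inverse:
  fixes n k \<alpha> :: nat and r :: real
  assumes "1 \<le> k" "2 * k \<le> n" "real k * log 2 (real n / real k) \<le> real \<alpha>"
    and "0 \<le> r" "r \<le> 1 / 4096"
  shows "real n * real ((n - 1) choose k) * r ^ \<alpha> \<le> 1 / real n"
proof -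
  define x where "x = real n / real k"
  define y where "y = x ^ k"
  have x: "2 \<le> x" using assms(1,2) by (simp add: x_def field_simps)
  have "real k \<le> 2 ^ k" using less_exp[of k] by (metis less_imp_le of_nat_le_iff of_nat_numeral of_nat_power)
  also have "\<dots> \<le> y" unfolding y_def using x by (intro power_mono) auto
  finally have ky: "real k \<le> y" .
  have xy: "x \<le> y" unfolding y_def using power_increasing[of 1 k x] assms(1) x by simp
  have y: "1 \<le> y" using x xy by linarith
  have n: "real n \<le> y ^ 2"
  proof -
    have "real n = real k * x" using assms(1) by (simp add: x_def)
    also have "\<dots> \<le> y * y" using ky xy x by (intro mult_mono) auto
    finally show ?thesis by (simp add: power2_eq_square)
  qed
  have "(3::real) ^ k \<le> (2 ^ k) ^ 2"
    by (simp add: power_mult_distrib[symmetric] power2_eq_square power_mono)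
  also have "\<dots> \<le> y ^ 2" unfolding y_def using x by (intro power_mono) auto
  finally have three: "3 ^ k \<le> y ^ 2" .
  have "real ((n - 1) choose k) \<le> real (n choose k)" using binomial_right_mono[of "n - 1" n k] by simp
  also have "\<dots> \<le> (3 * x) ^ k" using binomial_le_three_n_over_k_pow[of n k] by (simp add: x_def)
  also have "\<dots> = 3 ^ k * y" by (simp add: y_def power_mult_distrib)
  also have "\<dots> \<le> y ^ 2 * y" using three y by (intro mult_right_mono) auto
  finally have binomial: "real ((n - 1) choose k) \<le> y ^ 3" by (simp add: power_numeral_reduce)
  have "log 2 (y ^ 12) \<le> log 2 (2 ^ (12 * \<alpha>))"
    using x assms(3) by (simp add: y_def log_nat_power x_def)
  then have y_le: "y ^ 12 \<le> 2 ^ (12 * \<alpha>)" using y by (subst (asm) log_le_cancel_iff) auto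
  have "r ^ \<alpha> \<le> (1 / 4096) ^ \<alpha>" using assms(4,5) by (intro power_mono)
  also have "\<dots> = 1 / 2 ^ (12 * \<alpha>)" by (simp add: power_mult power_one_over)
  also have "\<dots> \<le> 1 / y ^ 12" using y_le y by (intro divide_left_mono) auto
  finally have r: "r ^ \<alpha> \<le> 1 / y ^ 12" .
  have "real n * real ((n - 1) choose k) * r ^ \<alpha> \<le> y ^ 2 * y ^ 3 * (1 / y ^ 12)"
    using n binomial r assms(4) y by (intro mult_mono) auto
  also have "\<dots> = 1 / y ^ 7" using y by (simp add: field_simps flip: power_add)
  also have "\<dots> \<le> 1 / y ^ 2" using y by (intro divide_left_mono power_increasing) auto
  also have "\<dots> \<le> 1 / real n" using n y assms(1,2) by (intro divide_left_mono) auto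
  finally show ?thesis .
qed

theorem theorem1:
  "\<exists>C C' :: real. C > 0 \<and> C' > 0 \<and>
     (\<forall>n k d t :: nat. n \<ge> 2 \<longrightarrow> 1 \<le> k \<longrightarrow> 2 * k \<le> n \<longrightarrow>
        real t \<ge> C * (real d * real k + real k ^ 2) * log 2 (real n / real k) \<longrightarrow>
        (let \<alpha> = nat \<lceil>real k * log 2 (real n / real k)\<rceil> in
           (\<forall>M \<in> set_pmf (RandMatrix t n d k \<alpha>). runlength_constrained t n d M) \<and>
           measure_pmf.prob (RandMatrix t n d k \<alpha>) {M. disjunct t n k M} \<ge> 1 - C' / real n))"
proof (rule exI[of _ 16384], rule exI[of _ 1], intro conjI allI impI)
  fix n k d t :: nat
  assume "n \<ge> 2" and k: "1 \<le> k" "2 * k \<le> n"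
    and t: "16384 * (real d * real k + real k ^ 2) * log 2 (real n / real k) \<le> real t"
  define L where "L = log 2 (real n / real k)"
  define \<alpha> where "\<alpha> = nat \<lceil>real k * L\<rceil>"
  have "1 \<le> L" using k by (simp add: L_def field_simps)
  then have "1 \<le> real k * L" using k mult_mono[of 1 "real k" 1 L] by simp
  moreover have "real \<alpha> = of_int \<lceil>real k * L\<rceil>" using \<open>1 \<le> real k * L\<close> by (simp add: \<alpha>_def)
  ultimately have \<alpha>: "real k * L \<le> real \<alpha>" "real \<alpha> \<le> 2 * real k * L"
    using le_of_int_ceiling[of "real k * L"] of_int_ceiling_le_add_one[of "real k * L"] by linarith+
  note window = window_ratio_le[OF k(1) \<open>1 \<le> L\<close> \<alpha>(2) t[folded L_def]]
  have "real ((2 * d + 1) * \<alpha>) < real t" using window(1) by (simp only: of_nat_less_iff)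
  then have "0 \<le> real (k * \<alpha>) / (real t - real ((2 * d + 1) * \<alpha>))" by simp
  have "measure_pmf.prob (RandMatrix t n d k \<alpha>) {M. \<not> disjunct t n k M}
      \<le> real n * real ((n - 1) choose k) * (real (k * \<alpha>) / (real t - real ((2 * d + 1) * \<alpha>))) ^ \<alpha>"
    by (rule measure_RandMatrix_not_disjunct_le) (use k window(1) in auto)
  also have "\<dots> \<le> 1 / real n"
    by (rule union_bound_le_inverse) (use k \<alpha>(1) window(2) \<open>0 \<le> _ / _\<close> in \<open>auto simp: L_def\<close>)
  finally have "measure_pmf.prob (RandMatrix t n d k \<alpha>) {M. \<not> disjunct t n k M} \<le> 1 / real n" .
  then have "1 - 1 / real n \<le> measure_pmf.prob (RandMatrix t n d k \<alpha>) {M. disjunct t n k M}"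
    using measure_pmf.prob_neg[of _ "disjunct t n k"] by simp
  then show "let \<alpha> = nat \<lceil>real k * log 2 (real n / real k)\<rceil> in
           (\<forall>M \<in> set_pmf (RandMatrix t n d k \<alpha>). runlength_constrained t n d M) \<and>
           measure_pmf.prob (RandMatrix t n d k \<alpha>) {M. disjunct t n k M} \<ge> 1 - 1 / real n"
    using runlength_constrained_RandMatrix by (simp add: \<alpha>_def L_def)
qed simp_all

end
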